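(* Let $p$ be an odd prime and let $\sim$ be a nontrivial equivalence relation on $\mathbb{Z}_p^\times = \mathbb{Z}_p - \{0\}$ such that for $x \neq y$, $x \sim y$ implies $(y-x) \sim (-x)$. Then: (1) for every $x \in \mathbb{Z}_p^\times$, $x \not\sim (-x)$; (2) if $x,y$ are distinct elements of some equivalence class, then $y-x$ does not belong to that class; (3) if $x \sim y$ and $x \neq y$, then $(-x) \not\sim (-y)$; (4) if $x,y$ and $z,w$ are two pairs of distinct elements of some equivalence class (i.e. $x\neq y$, $z \neq w$, all four in the same class) and $x-y=z-w$, then $x=z$ and $y=w$.
   Context: An equivalence relation is nontrivial if it has at least two equivalence classes. *)

theory Defs
  imports "HOL-Computational_Algebra.Primes"
begin

text \<open>Z_p^x represented by the integer residues 1..p-1; arithmetic is taken mod p.\<close>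
definition Zp_units :: "int \<Rightarrow> int set" where
  "Zp_units p = {1..p - 1}"

end

theory Submission
  imports Defs "HOL-Number_Theory.Cong"
begin

text \<open>If \<open>x \<sim> -x\<close>, then for \<open>y \<sim> x\<close> with \<open>y \<noteq> -x\<close> the hypothesis applied to \<open>-x \<sim> y\<close>
  gives \<open>y + x \<sim> x\<close>; hence the class of \<open>x\<close> contains all multiples \<open>k x\<close>, \<open>1 \<le> k < p\<close>,
  which exhaust the units mod \<open>p\<close>, contradicting nontriviality.\<close>

lemma Zp_units_iff: "x \<in> Zp_units p \<longleftrightarrow> 1 \<le> x \<and> x < p"
  by (simp add: Zp_units_def)

lemma mod_Zp_unit [simp]: "x \<in> Zp_units p \<Longrightarrow> x mod p = x"
  by (simp add: Zp_units_iff)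

lemma Zp_unit_not_dvd: "x \<in> Zp_units p \<Longrightarrow> \<not> p dvd x"
  using zdvd_not_zless[of x p] by (simp add: Zp_units_iff)

lemma minus_minus_mod_Zp_unit: "x \<in> Zp_units p \<Longrightarrow> (- ((- x) mod p)) mod p = x"
  by (simp add: mod_minus_eq)

lemma Zp_units_eqI: "x \<in> Zp_units p \<Longrightarrow> y \<in> Zp_units p \<Longrightarrow> [x = y] (mod p) \<Longrightarrow> x = y"
  by (simp add: cong_def)

lemma Zp_units_mult_surj:
  assumes "prime p" and "x \<in> Zp_units p" and "u \<in> Zp_units p"
  shows "\<exists>k \<in> Zp_units p. (k * x) mod p = u"
proof -
  have "coprime x p"
    using assms by (simp add: Zp_unit_not_dvd prime_imp_coprime_int coprime_commute)
  then obtain a where a: "[x * a = 1] (mod p)"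
    using cong_solve_coprime_int by blast
  define k where "k = (a * u) mod p"
  have "[k * x = (a * u) * x] (mod p)"
    unfolding k_def by (simp add: cong_def mod_mult_left_eq)
  also have "(a * u) * x = (x * a) * u"
    by (simp add: ac_simps)
  also have "[(x * a) * u = 1 * u] (mod p)"
    using a by (rule cong_mult) simp
  finally have "(k * x) mod p = u"
    using assms(3) by (simp add: cong_def)
  moreover have "k \<in> Zp_units p"
  proof -
    have "0 \<le> k" "k < p"
      using prime_gt_0_int[OF assms(1)] by (simp_all add: k_def)
    moreover have "k \<noteq> 0"
      using \<open>(k * x) mod p = u\<close> assms(3) by (auto simp: Zp_units_iff)
    ultimately show ?thesis
      by (simp add: Zp_units_iff)
  qed
  ultimately show ?thesis by blast
qed

locale diff_closed_equiv =
  fixes p :: int and R :: "(int \<times> int) set"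
  assumes prime: "prime p"
    and equiv: "equiv (Zp_units p) R"
    and diff_closed: "\<And>x y. (x, y) \<in> R \<Longrightarrow> x \<noteq> y \<Longrightarrow> ((y - x) mod p, (- x) mod p) \<in> R"
begin

lemma related_Zp_units:
  assumes "(x, y) \<in> R"
  shows "x \<in> Zp_units p" and "y \<in> Zp_units p"
  using assms equiv by (auto simp: equiv_def refl_on_def)

lemma related_sym: "(x, y) \<in> R \<Longrightarrow> (y, x) \<in> R"
  using equiv by (auto simp: equiv_def dest: symD)

lemma related_trans: "(x, y) \<in> R \<Longrightarrow> (y, z) \<in> R \<Longrightarrow> (x, z) \<in> R"
  using equiv by (auto simp: equiv_def dest: transD)

lemma related_add_if_related_neg:
  assumes neg: "(x, (- x) mod p) \<in> R" and "(x, y) \<in> R" and "y \<noteq> (- x) mod p"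
  shows "(x, (y + x) mod p) \<in> R"
proof -
  have "((- x) mod p, y) \<in> R"
    using assms related_sym related_trans by blast
  then have "((y - (- x) mod p) mod p, (- ((- x) mod p)) mod p) \<in> R"
    using diff_closed assms(3) by simp
  then show ?thesis
    using related_Zp_units(1)[OF neg] related_sym
    by (simp add: mod_diff_right_eq minus_minus_mod_Zp_unit)
qed

lemma related_multiples_if_related_neg:
  assumes neg: "(x, (- x) mod p) \<in> R" and "1 \<le> k" and "k < p"
  shows "(x, (k * x) mod p) \<in> R"
  using \<open>1 \<le> k\<close> \<open>k < p\<close>
proof (induction k rule: int_ge_induct)
  case base
  show ?case
    using related_Zp_units(1)[OF neg] equiv by (simp add: equiv_def refl_on_def)
next
  case (step k)
  have x: "x \<in> Zp_units p"
    using related_Zp_units(1)[OF neg] .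
  have "(k * x) mod p \<noteq> (- x) mod p"
  proof
    assume "(k * x) mod p = (- x) mod p"
    then have "p dvd (k + 1) * x"
      by (simp add: mod_eq_dvd_iff algebra_simps)
    moreover have "\<not> p dvd k + 1"
      using step zdvd_not_zless[of "k + 1" p] by simp
    ultimately show False
      using x prime by (simp add: prime_dvd_mult_iff Zp_unit_not_dvd)
  qed
  then have "(x, ((k * x) mod p + x) mod p) \<in> R"
    using step by (intro related_add_if_related_neg neg) simp_all
  moreover have "((k * x) mod p + x) mod p = ((k + 1) * x) mod p"
    by (simp add: mod_add_left_eq distrib_right)
  ultimately show ?case
    by simp
qed

lemma single_class_if_related_neg:
  assumes "(x, (- x) mod p) \<in> R"
  shows "Zp_units p // R = {R `` {x}}"
proof -
  have x: "x \<in> Zp_units p"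
    using related_Zp_units(1)[OF assms] .
  have "(x, u) \<in> R" if u: "u \<in> Zp_units p" for u
  proof -
    obtain k where "k \<in> Zp_units p" and "(k * x) mod p = u"
      using Zp_units_mult_surj[OF prime x u] by blast
    then show ?thesis
      using related_multiples_if_related_neg[OF assms] by (auto simp: Zp_units_iff)
  qed
  then show ?thesis
    using x equiv_class_eq[OF equiv] by (auto simp: quotient_def)
qed

end

locale nontrivial_diff_closed_equiv = diff_closed_equiv +
  assumes nontrivial: "card (Zp_units p // R) \<ge> 2"
begin

lemma not_related_neg: "(x, (- x) mod p) \<notin> R"
  using single_class_if_related_neg nontrivial by fastforce

lemma not_related_diff:
  assumes "(x, y) \<in> R" and "x \<noteq> y"
  shows "(x, (y - x) mod p) \<notin> R"
  using assms diff_closed related_trans not_related_neg by blast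

lemma neg_not_related_neg:
  assumes xy: "(x, y) \<in> R" and "x \<noteq> y"
  shows "((- x) mod p, (- y) mod p) \<notin> R"
proof
  assume neg: "((- x) mod p, (- y) mod p) \<in> R"
  have x: "x \<in> Zp_units p" and y: "y \<in> Zp_units p"
    using related_Zp_units[OF xy] .
  have "(- x) mod p \<noteq> (- y) mod p"
    using \<open>x \<noteq> y\<close> minus_minus_mod_Zp_unit[OF x] minus_minus_mod_Zp_unit[OF y] by metis
  then have "(((- y) mod p - (- x) mod p) mod p, (- ((- x) mod p)) mod p) \<in> R"
    using diff_closed[OF neg] by simp
  then have xy_x: "((x - y) mod p, x) \<in> R"
    using x by (simp add: mod_diff_eq minus_minus_mod_Zp_unit)
  have "(x - y) mod p \<noteq> x"
  proof
    assume "(x - y) mod p = x"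
    then have "[x - y = x] (mod p)"
      using x by (simp add: cong_def)
    then have "p dvd y"
      by (simp add: cong_iff_dvd_diff)
    then show False
      using y Zp_unit_not_dvd by blast
  qed
  then have "((x - y) mod p, (x - (x - y) mod p) mod p) \<notin> R"
    using not_related_diff[OF xy_x] by simp
  moreover have "(x - (x - y) mod p) mod p = y"
    using y by (simp add: mod_diff_right_eq)
  ultimately show False
    using xy_x xy related_trans by auto
qed

lemma diff_in_class_inj:
  assumes xy: "(x, y) \<in> R" and xz: "(x, z) \<in> R" and xw: "(x, w) \<in> R"
    and "x \<noteq> y" and "z \<noteq> w" and diff: "(x - y) mod p = (z - w) mod p"
  shows "x = z \<and> y = w"
proof -
  have zw: "(z, w) \<in> R"
    using xz xw related_sym related_trans by blast
  have "(y - x) mod p = (w - z) mod p"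
    using diff by (metis minus_diff_eq mod_minus_eq)
  then have "((- x) mod p, (- z) mod p) \<in> R"
    using diff_closed[OF xy \<open>x \<noteq> y\<close>] diff_closed[OF zw \<open>z \<noteq> w\<close>] related_sym related_trans
    by metis
  then have "x = z"
    using neg_not_related_neg[OF xz] by blast
  with diff have "[z + - y = z + - w] (mod p)"
    by (simp add: cong_def)
  then have "[y = w] (mod p)"
    by (simp only: cong_add_lcancel cong_minus_minus_iff)
  then show ?thesis
    using \<open>x = z\<close> Zp_units_eqI related_Zp_units(2)[OF xy] related_Zp_units(2)[OF xw] by blast
qed

end

theorem proposition3p15:
  fixes p :: int and R :: "(int \<times> int) set"
  assumes "prime p" and "odd p"
    and "equiv (Zp_units p) R"
    and "card (Zp_units p // R) \<ge> 2"
    and "\<And>x y. (x, y) \<in> R \<Longrightarrow> x \<noteq> y \<Longrightarrow> ((y - x) mod p, (- x) mod p) \<in> R"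
  shows "(\<forall>x \<in> Zp_units p. (x, (- x) mod p) \<notin> R)
    \<and> (\<forall>x y. (x, y) \<in> R \<and> x \<noteq> y \<longrightarrow> (x, (y - x) mod p) \<notin> R)
    \<and> (\<forall>x y. (x, y) \<in> R \<and> x \<noteq> y \<longrightarrow> ((- x) mod p, (- y) mod p) \<notin> R)
    \<and> (\<forall>x y z w. (x, y) \<in> R \<and> (x, z) \<in> R \<and> (x, w) \<in> R \<and> x \<noteq> y \<and> z \<noteq> w
          \<and> (x - y) mod p = (z - w) mod p \<longrightarrow> x = z \<and> y = w)"
proof -
  interpret nontrivial_diff_closed_equiv p R
    using assms by unfold_locales
  show ?thesis
    using not_related_neg not_related_diff neg_not_related_neg diff_in_class_inj by blast
qed

end
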